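(* Let $(Y_i,D_i,Z_i,X_i)$, $i=1,\dots,N$, be data with $Y_i\in\mathbb{R}$, $D_i,Z_i\in\{0,1\}$, $X_i\in\mathbb{R}^k$, where $X_i$ includes a constant component (equal to $1$ for all $i$). Let $F(x,\alpha)\in(0,1)$ be a parametric model for the instrument propensity score and let $\hat\alpha_{cb}$ satisfy the covariate balancing equations $$\frac1N\sum_{i=1}^N X_i\,\frac{Z_i-F(X_i,\hat\alpha_{cb})}{F(X_i,\hat\alpha_{cb})\big(1-F(X_i,\hat\alpha_{cb})\big)}=0 .$$ Write $\hat p_i=F(X_i,\hat\alpha_{cb})$, $\hat\kappa_{i1}=D_i\frac{Z_i-\hat p_i}{\hat p_i(1-\hat p_i)}$, $\hat\kappa_{i0}=(1-D_i)\frac{(1-Z_i)-(1-\hat p_i)}{\hat p_i(1-\hat p_i)}$, and define $$\tilde\tau_{t}=\Big[\sum_i\frac{D_iZ_i}{\hat p_i}-\sum_i\frac{D_i(1-Z_i)}{1-\hat p_i}\Big]^{-1}\Big[\sum_i\frac{Y_iZ_i}{\hat p_i}-\sum_i\frac{Y_i(1-Z_i)}{1-\hat p_i}\Big],\qquad \tilde\tau_{a,1}=\Big[\sum_i\hat\kappa_{i1}\Big]^{-1}\sum_i Y_i\frac{Z_i-\hat p_i}{\hat p_i(1-\hat p_i)},$$ $$\tilde\tau_{a,0}=\Big[\sum_i\hat\kappa_{i0}\Big]^{-1}\sum_i Y_i\frac{Z_i-\hat p_i}{\hat p_i(1-\hat p_i)},\qquad \tilde\tau_{a,10}=\Big[\sum_i\hat\kappa_{i1}\Big]^{-1}\sum_i\hat\kappa_{i1}Y_i-\Big[\sum_i\hat\kappa_{i0}\Big]^{-1}\sum_i\hat\kappa_{i0}Y_i,$$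 $$\hat\tau_{cb}=\frac{\big[\sum_i\frac{Z_i}{\hat p_i}\big]^{-1}\sum_i\frac{Y_iZ_i}{\hat p_i}-\big[\sum_i\frac{1-Z_i}{1-\hat p_i}\big]^{-1}\sum_i\frac{Y_i(1-Z_i)}{1-\hat p_i}}{\big[\sum_i\frac{Z_i}{\hat p_i}\big]^{-1}\sum_i\frac{D_iZ_i}{\hat p_i}-\big[\sum_i\frac{1-Z_i}{1-\hat p_i}\big]^{-1}\sum_i\frac{D_i(1-Z_i)}{1-\hat p_i}}$$ (assuming the denominators are nonzero). Then $\tilde\tau_t$ ($=\tilde\tau_{a,1}$), $\tilde\tau_{a,0}$ and $\tilde\tau_{a,10}$ are numerically identical and equal to $\hat\tau_{cb}$.
   Context: $\hat\alpha_{cb}$ is the just-identified covariate balancing estimator of the propensity score parameter (Imai–Ratkovic type), defined by the displayed sample moment equations. *)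

theory Defs
  imports "HOL-Analysis.Analysis"
begin

text \<open>Observations are indexed by i = 1..N; p i stands for the fitted
instrument propensity score F(X_i, alpha_cb).  [.]^{-1} is rendered as inverse.\<close>

definition kappa1 :: "(nat \<Rightarrow> real) \<Rightarrow> (nat \<Rightarrow> real) \<Rightarrow> (nat \<Rightarrow> real) \<Rightarrow> nat \<Rightarrow> real" where
  "kappa1 D Z p i = D i * ((Z i - p i) / (p i * (1 - p i)))"

definition kappa0 :: "(nat \<Rightarrow> real) \<Rightarrow> (nat \<Rightarrow> real) \<Rightarrow> (nat \<Rightarrow> real) \<Rightarrow> nat \<Rightarrow> real" where
  "kappa0 D Z p i = (1 - D i) * (((1 - Z i) - (1 - p i)) / (p i * (1 - p i)))"

definition tau_t :: "nat \<Rightarrow> (nat \<Rightarrow> real) \<Rightarrow> (nat \<Rightarrow> real) \<Rightarrow> (nat \<Rightarrow> real) \<Rightarrow> (nat \<Rightarrow> real) \<Rightarrow> real" where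
  "tau_t N Y D Z p =
     inverse ((\<Sum>i=1..N. D i * Z i / p i) - (\<Sum>i=1..N. D i * (1 - Z i) / (1 - p i)))
     * ((\<Sum>i=1..N. Y i * Z i / p i) - (\<Sum>i=1..N. Y i * (1 - Z i) / (1 - p i)))"

definition tau_a1 :: "nat \<Rightarrow> (nat \<Rightarrow> real) \<Rightarrow> (nat \<Rightarrow> real) \<Rightarrow> (nat \<Rightarrow> real) \<Rightarrow> (nat \<Rightarrow> real) \<Rightarrow> real" where
  "tau_a1 N Y D Z p =
     inverse (\<Sum>i=1..N. kappa1 D Z p i)
     * (\<Sum>i=1..N. Y i * ((Z i - p i) / (p i * (1 - p i))))"

definition tau_a0 :: "nat \<Rightarrow> (nat \<Rightarrow> real) \<Rightarrow> (nat \<Rightarrow> real) \<Rightarrow> (nat \<Rightarrow> real) \<Rightarrow> (nat \<Rightarrow> real) \<Rightarrow> real" where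
  "tau_a0 N Y D Z p =
     inverse (\<Sum>i=1..N. kappa0 D Z p i)
     * (\<Sum>i=1..N. Y i * ((Z i - p i) / (p i * (1 - p i))))"

definition tau_a10 :: "nat \<Rightarrow> (nat \<Rightarrow> real) \<Rightarrow> (nat \<Rightarrow> real) \<Rightarrow> (nat \<Rightarrow> real) \<Rightarrow> (nat \<Rightarrow> real) \<Rightarrow> real" where
  "tau_a10 N Y D Z p =
     inverse (\<Sum>i=1..N. kappa1 D Z p i) * (\<Sum>i=1..N. kappa1 D Z p i * Y i)
     - inverse (\<Sum>i=1..N. kappa0 D Z p i) * (\<Sum>i=1..N. kappa0 D Z p i * Y i)"

definition tau_cb :: "nat \<Rightarrow> (nat \<Rightarrow> real) \<Rightarrow> (nat \<Rightarrow> real) \<Rightarrow> (nat \<Rightarrow> real) \<Rightarrow> (nat \<Rightarrow> real) \<Rightarrow> real" where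
  "tau_cb N Y D Z p =
     (inverse (\<Sum>i=1..N. Z i / p i) * (\<Sum>i=1..N. Y i * Z i / p i)
       - inverse (\<Sum>i=1..N. (1 - Z i) / (1 - p i)) * (\<Sum>i=1..N. Y i * (1 - Z i) / (1 - p i)))
     / (inverse (\<Sum>i=1..N. Z i / p i) * (\<Sum>i=1..N. D i * Z i / p i)
       - inverse (\<Sum>i=1..N. (1 - Z i) / (1 - p i)) * (\<Sum>i=1..N. D i * (1 - Z i) / (1 - p i)))"

end

theory Submission
  imports Defs
begin

text \<open>With the weights \<open>w\<^sub>i = (Z\<^sub>i - p\<^sub>i) / (p\<^sub>i (1 - p\<^sub>i)) = Z\<^sub>i / p\<^sub>i - (1 - Z\<^sub>i) / (1 - p\<^sub>i)\<close>,
every estimator is a ratio of weighted sums.  The balancing equation for the constant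
covariate says \<open>\<Sum> w\<^sub>i = 0\<close>; this makes \<open>\<kappa>\<^sub>0\<close> and \<open>\<kappa>\<^sub>1\<close> have the same sum, lets
\<open>\<kappa>\<^sub>0 = \<kappa>\<^sub>1 - w\<close> drop out of the weighted mean of \<open>Y\<close>, and equalises the two
normalisations in \<open>\<tau>\<^sub>c\<^sub>b\<close>, so that all estimators reduce to \<open>\<Sum> Y\<^sub>i w\<^sub>i / \<Sum> D\<^sub>i w\<^sub>i\<close>.\<close>

definition iv_weight :: "(nat \<Rightarrow> real) \<Rightarrow> (nat \<Rightarrow> real) \<Rightarrow> nat \<Rightarrow> real" where
  "iv_weight Z p i = (Z i - p i) / (p i * (1 - p i))"

lemma iv_weight_eq_diff:
  assumes "p i \<notin> {0, 1}"
  shows "iv_weight Z p i = Z i / p i - (1 - Z i) / (1 - p i)"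
proof -
  have "p i \<noteq> 0" "1 - p i \<noteq> 0" using assms by auto
  then show ?thesis unfolding iv_weight_def by (simp add: field_simps)
qed

lemma sum_ipw_diff_eq_sum_iv_weight:
  assumes "\<forall>i\<in>{1..N}. p i \<notin> {0, 1}"
  shows "(\<Sum>i=1..N. V i * Z i / p i) - (\<Sum>i=1..N. V i * (1 - Z i) / (1 - p i))
       = (\<Sum>i=1..N. V i * iv_weight Z p i)"
  unfolding sum_subtractf[symmetric]
  using assms by (intro sum.cong) (simp_all add: iv_weight_eq_diff algebra_simps)

lemma sum_iv_weight_eq_zero_if_balanced:
  fixes X :: "nat \<Rightarrow> real ^ 'k"
  assumes balance: "(1 / real N) *\<^sub>R (\<Sum>i=1..N. w i *\<^sub>R X i) = 0"
    and const: "\<forall>i\<in>{1..N}. X i $ c = 1"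
  shows "(\<Sum>i=1..N. w i) = 0"
proof (cases "N = 0")
  case False
  have "(\<Sum>i=1..N. w i) = (\<Sum>i=1..N. w i * X i $ c)"
    using const by (intro sum.cong) auto
  also have "\<dots> = (\<Sum>i=1..N. w i *\<^sub>R X i) $ c"
    by simp
  also have "\<dots> = 0"
    using balance False by simp
  finally show ?thesis .
qed simp

lemma kappa1_eq: "kappa1 D Z p i = D i * iv_weight Z p i"
  by (simp add: kappa1_def iv_weight_def)

lemma kappa0_eq: "kappa0 D Z p i = (D i - 1) * iv_weight Z p i"
proof -
  have "kappa0 D Z p i = (1 - D i) * - iv_weight Z p i"
    unfolding kappa0_def iv_weight_def by (simp add: minus_divide_left)
  then show ?thesis by (simp add: algebra_simps)
qed

lemma sum_kappa0_eq_sum_kappa1: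
  assumes "(\<Sum>i=1..N. iv_weight Z p i) = 0"
  shows "(\<Sum>i=1..N. kappa0 D Z p i) = (\<Sum>i=1..N. kappa1 D Z p i)"
  using assms by (simp add: kappa0_eq kappa1_eq algebra_simps sum_subtractf)

lemma tau_a1_eq: "tau_a1 N Y D Z p
    = inverse (\<Sum>i=1..N. kappa1 D Z p i) * (\<Sum>i=1..N. Y i * iv_weight Z p i)"
  unfolding tau_a1_def iv_weight_def ..

lemma tau_t_eq_tau_a1:
  assumes "\<forall>i\<in>{1..N}. p i \<notin> {0, 1}"
  shows "tau_t N Y D Z p = tau_a1 N Y D Z p"
  unfolding tau_t_def tau_a1_eq sum_ipw_diff_eq_sum_iv_weight[OF assms] kappa1_eq ..

lemma tau_a0_eq_tau_a1:
  assumes "(\<Sum>i=1..N. iv_weight Z p i) = 0"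
  shows "tau_a0 N Y D Z p = tau_a1 N Y D Z p"
  using sum_kappa0_eq_sum_kappa1[OF assms]
  by (simp add: tau_a0_def tau_a1_def)

lemma tau_a10_eq_tau_a1:
  assumes "(\<Sum>i=1..N. iv_weight Z p i) = 0"
  shows "tau_a10 N Y D Z p = tau_a1 N Y D Z p"
proof -
  have "(\<Sum>i=1..N. kappa0 D Z p i * Y i)
      = (\<Sum>i=1..N. kappa1 D Z p i * Y i) - (\<Sum>i=1..N. Y i * iv_weight Z p i)"
    by (simp add: kappa0_eq kappa1_eq sum_subtractf[symmetric] algebra_simps)
  then show ?thesis
    unfolding tau_a10_def tau_a1_eq sum_kappa0_eq_sum_kappa1[OF assms]
    by (simp add: right_diff_distrib)
qed

lemma tau_cb_eq_tau_a1:
  assumes p: "\<forall>i\<in>{1..N}. p i \<notin> {0, 1}"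
    and balanced: "(\<Sum>i=1..N. iv_weight Z p i) = 0"
    and nz: "(\<Sum>i=1..N. Z i / p i) \<noteq> 0"
  shows "tau_cb N Y D Z p = tau_a1 N Y D Z p"
proof -
  define S where "S = (\<Sum>i=1..N. Z i / p i)"
  have "S - (\<Sum>i=1..N. (1 - Z i) / (1 - p i)) = 0"
    using sum_ipw_diff_eq_sum_iv_weight[OF p, of "\<lambda>_. 1"] balanced by (simp add: S_def)
  then have "tau_cb N Y D Z p
      = (inverse S * (\<Sum>i=1..N. Y i * iv_weight Z p i))
        / (inverse S * (\<Sum>i=1..N. D i * iv_weight Z p i))"
    unfolding tau_cb_def S_def[symmetric] sum_ipw_diff_eq_sum_iv_weight[OF p, symmetric]
    by (simp add: right_diff_distrib)
  also have "\<dots> = tau_a1 N Y D Z p"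
    using nz unfolding S_def tau_a1_eq kappa1_eq by (simp add: divide_inverse mult.commute)
  finally show ?thesis .
qed

theorem proposition2:
  fixes N :: nat
    and Y D Z :: "nat \<Rightarrow> real"
    and X :: "nat \<Rightarrow> real ^ 'k"
    and F :: "real ^ 'k \<Rightarrow> 'a \<Rightarrow> real"
    and alpha_cb :: 'a
    and c :: 'k
  assumes D01: "\<forall>i\<in>{1..N}. D i \<in> {0, 1}"
    and Z01: "\<forall>i\<in>{1..N}. Z i \<in> {0, 1}"
    and const: "\<forall>i\<in>{1..N}. X i $ c = 1"
    and F01: "\<forall>x a. 0 < F x a \<and> F x a < 1"
    and balance: "(1 / real N) *\<^sub>R
        (\<Sum>i=1..N. ((Z i - F (X i) alpha_cb) /
                     (F (X i) alpha_cb * (1 - F (X i) alpha_cb))) *\<^sub>R X i) = 0"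
    and nz_t: "(\<Sum>i=1..N. D i * Z i / F (X i) alpha_cb)
               - (\<Sum>i=1..N. D i * (1 - Z i) / (1 - F (X i) alpha_cb)) \<noteq> 0"
    and nz_k1: "(\<Sum>i=1..N. kappa1 D Z (\<lambda>i. F (X i) alpha_cb) i) \<noteq> 0"
    and nz_k0: "(\<Sum>i=1..N. kappa0 D Z (\<lambda>i. F (X i) alpha_cb) i) \<noteq> 0"
    and nz_z1: "(\<Sum>i=1..N. Z i / F (X i) alpha_cb) \<noteq> 0"
    and nz_z0: "(\<Sum>i=1..N. (1 - Z i) / (1 - F (X i) alpha_cb)) \<noteq> 0"
    and nz_cb: "inverse (\<Sum>i=1..N. Z i / F (X i) alpha_cb)
                  * (\<Sum>i=1..N. D i * Z i / F (X i) alpha_cb)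
               - inverse (\<Sum>i=1..N. (1 - Z i) / (1 - F (X i) alpha_cb))
                  * (\<Sum>i=1..N. D i * (1 - Z i) / (1 - F (X i) alpha_cb)) \<noteq> 0"
  shows "tau_t N Y D Z (\<lambda>i. F (X i) alpha_cb) = tau_a1 N Y D Z (\<lambda>i. F (X i) alpha_cb)
       \<and> tau_a0 N Y D Z (\<lambda>i. F (X i) alpha_cb) = tau_t N Y D Z (\<lambda>i. F (X i) alpha_cb)
       \<and> tau_a10 N Y D Z (\<lambda>i. F (X i) alpha_cb) = tau_t N Y D Z (\<lambda>i. F (X i) alpha_cb)
       \<and> tau_t N Y D Z (\<lambda>i. F (X i) alpha_cb) = tau_cb N Y D Z (\<lambda>i. F (X i) alpha_cb)"
proof -
  define p where "p = (\<lambda>i. F (X i) alpha_cb)"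
  have "0 < p i" "p i < 1" for i
    using F01 by (simp_all add: p_def)
  then have p: "\<forall>i\<in>{1..N}. p i \<notin> {0, 1}"
    by (metis insertE empty_iff less_irrefl)
  have "(1 / real N) *\<^sub>R (\<Sum>i=1..N. iv_weight Z p i *\<^sub>R X i) = 0"
    using balance unfolding p_def iv_weight_def .
  then have balanced: "(\<Sum>i=1..N. iv_weight Z p i) = 0"
    using const by (rule sum_iv_weight_eq_zero_if_balanced)
  have nz: "(\<Sum>i=1..N. Z i / p i) \<noteq> 0"
    using nz_z1 by (simp add: p_def)
  show ?thesis
    unfolding p_def[symmetric]
    using tau_t_eq_tau_a1[OF p] tau_a0_eq_tau_a1[OF balanced] tau_a10_eq_tau_a1[OF balanced]
      tau_cb_eq_tau_a1[OF p balanced nz]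
    by simp
qed

end
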